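(* Let $\alpha>0$, $\beta>0$, $D>0$, $W\ge0$ and $T\ge W+1$. Let $X=[-D/2,D/2]$ and $x_0=0$, and let $0<\nu\le D$. Let $\theta_1=\dots=\theta_W=0$, let $\theta_{W+1}$ satisfy $\mathbb P(\theta_{W+1}=\nu/2)=\mathbb P(\theta_{W+1}=-\nu/2)=1/2$, and let $\theta_t=\theta_{W+1}$ for $W+2\le t\le T$. Let $f_t(x)=\frac\alpha2(x-\theta_t)^2$ and $x^*=\arg\min_{x\in X^T}\sum_{t=1}^T\big(f_t(x_t)+\frac\beta2(x_t-x_{t-1})^2\big)$. Then for any online deterministic algorithm $\mathcal A$ with prediction window $W$, $$\mathbb E|x_1^{\mathcal A}-x_1^*|^2\ge\frac{a_{1,1+W}^2\nu^2}{4},$$ where $a_{1,1+W}$ is the $(1,1+W)$ entry of $A=H^{-1}$.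
   Context: Online deterministic algorithm with prediction window $W$: $x_t^{\mathcal A}=\mathcal A_t(I_t)$, where $\mathcal A_t$ is deterministic and $I_t$ consists of fixed initial knowledge together with $f_1,\dots,f_{\min(t+W-1,T)}$. In particular, $x_1^{\mathcal A}$ depends only on $\theta_1,\dots,\theta_W$. $H\in\mathbb R^{T\times T}$ is the symmetric tridiagonal matrix with diagonal entries $1+2\beta/\alpha$ (the last one being $1+\beta/\alpha$) and off-diagonal entries $-\beta/\alpha$. It satisfies $x^*=H^{-1}\theta$. *)

theory Defs
  imports "HOL-Probability.Probability" "Jordan_Normal_Form.Gauss_Jordan_Elimination"
begin

(* Tridiagonal matrix H (0-based indices 0..T-1) *)
definition Hmat :: "real \<Rightarrow> real \<Rightarrow> nat \<Rightarrow> real mat" where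
  "Hmat \<alpha> \<beta> T = mat T T (\<lambda>(i,j).
      if i = j then (if i = T - 1 then 1 + \<beta>/\<alpha> else 1 + 2*\<beta>/\<alpha>)
      else if i = j + 1 \<or> j = i + 1 then - \<beta>/\<alpha> else 0)"

definition Amat :: "real \<Rightarrow> real \<Rightarrow> nat \<Rightarrow> real mat" where
  "Amat \<alpha> \<beta> T = the (mat_inverse (Hmat \<alpha> \<beta> T))"

definition total_cost :: "real \<Rightarrow> real \<Rightarrow> nat \<Rightarrow> (nat \<Rightarrow> real) \<Rightarrow> (nat \<Rightarrow> real) \<Rightarrow> real" where
  "total_cost \<alpha> \<beta> T \<theta> x = (\<Sum>t=1..T. \<alpha>/2 * (x t - \<theta> t)^2
        + \<beta>/2 * (x t - (if t = 1 then 0 else x (t - 1)))^2)"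

definition feasible :: "real \<Rightarrow> nat \<Rightarrow> (nat \<Rightarrow> real) \<Rightarrow> bool" where
  "feasible D T x \<longleftrightarrow> (\<forall>t\<in>{1..T}. x t \<in> {-D/2..D/2})"

definition is_opt :: "real \<Rightarrow> real \<Rightarrow> real \<Rightarrow> nat \<Rightarrow> (nat \<Rightarrow> real) \<Rightarrow> (nat \<Rightarrow> real) \<Rightarrow> bool" where
  "is_opt \<alpha> \<beta> D T \<theta> x \<longleftrightarrow> feasible D T x \<and>
     (\<forall>y. feasible D T y \<longrightarrow> total_cost \<alpha> \<beta> T \<theta> x \<le> total_cost \<alpha> \<beta> T \<theta> y)"

definition theta_inst :: "nat \<Rightarrow> real \<Rightarrow> nat \<Rightarrow> real" where
  "theta_inst W s t = (if t \<le> W then 0 else s)"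

definition f_inst :: "real \<Rightarrow> nat \<Rightarrow> real \<Rightarrow> nat \<Rightarrow> real \<Rightarrow> real" where
  "f_inst \<alpha> W s t x = \<alpha>/2 * (x - theta_inst W s t)^2"

end

theory Submission
  imports Defs "Jordan_Normal_Form.Determinant"
begin

text \<open>The first \<open>W\<close> cost functions do not depend on the sign of \<open>\<theta>\<^sub>W\<^sub>+\<^sub>1 = \<plusminus>\<nu>/2\<close>, so the
  algorithm plays the same \<open>x\<^sub>1\<close> in both cases, while the optimum moves with the sign.
  The box constraint is inactive, because clipping to the box decreases the cost, so the
  optimum is the stationary point \<open>H\<^sup>-\<^sup>1\<theta>\<close> and \<open>x\<^sub>1\<^sup>* = s S\<close> with \<open>S = a\<^sub>1\<^sub>,\<^sub>1\<^sub>+\<^sub>W + \<dots> + a\<^sub>1\<^sub>,\<^sub>T\<close>.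
  Replacing \<open>x\<close> by \<open>\<bar>x\<bar>\<close> decreases the cost when \<open>\<theta> \<ge> 0\<close>, so \<open>H\<^sup>-\<^sup>1\<close> is entrywise nonnegative
  and \<open>S \<ge> a\<^sub>1\<^sub>,\<^sub>1\<^sub>+\<^sub>W \<ge> 0\<close>. Finally \<open>((c - sS)\<^sup>2 + (c + sS)\<^sup>2)/2 \<ge> (sS)\<^sup>2\<close> for every \<open>c\<close>.\<close>

definition prev :: "(nat \<Rightarrow> real) \<Rightarrow> nat \<Rightarrow> real" where
  "prev x t = (if t = 1 then 0 else x (t - 1))"

text \<open>The vanishing of the gradient of \<^const>\<open>total_cost\<close> with respect to \<open>x\<^sub>1, \<dots>, x\<^sub>T\<close>.\<close>

definition stationary :: "real \<Rightarrow> real \<Rightarrow> nat \<Rightarrow> (nat \<Rightarrow> real) \<Rightarrow> (nat \<Rightarrow> real) \<Rightarrow> bool" where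
  "stationary \<alpha> \<beta> T \<theta> y \<longleftrightarrow> (\<forall>t\<in>{1..T}. \<alpha> * (y t - \<theta> t) + \<beta> * (y t - prev y t)
       - (if t < T then \<beta> * (y (t + 1) - y t) else 0) = 0)"

lemma total_cost_prev:
  "total_cost \<alpha> \<beta> T \<theta> x = (\<Sum>t=1..T. \<alpha>/2 * (x t - \<theta> t)^2 + \<beta>/2 * (x t - prev x t)^2)"
  unfolding total_cost_def prev_def by simp

lemma total_cost_nonneg: "\<alpha> \<ge> 0 \<Longrightarrow> \<beta> \<ge> 0 \<Longrightarrow> total_cost \<alpha> \<beta> T \<theta> x \<ge> 0"
  unfolding total_cost_prev by (intro sum_nonneg) auto

lemma total_cost_le_0_imp_eq:
  assumes "\<alpha> > 0" "\<beta> \<ge> 0" "total_cost \<alpha> \<beta> T \<theta> x \<le> 0" "t \<in> {1..T}"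
  shows "x t = \<theta> t"
proof -
  have "total_cost \<alpha> \<beta> T \<theta> x = 0"
    using assms total_cost_nonneg[of \<alpha> \<beta>] by (meson less_imp_le order_antisym)
  then have "\<alpha>/2 * (x t - \<theta> t)^2 + \<beta>/2 * (x t - prev x t)^2 = 0"
    using assms unfolding total_cost_prev by (subst (asm) sum_nonneg_eq_0_iff) auto
  moreover have "\<alpha>/2 * (x t - \<theta> t)^2 \<ge> 0" "\<beta>/2 * (x t - prev x t)^2 \<ge> 0"
    using assms(1,2) by simp_all
  ultimately have "\<alpha>/2 * (x t - \<theta> t)^2 = 0" by linarith
  then show ?thesis using assms by simp
qed

lemma sum_mult_diff_prev:
  "(\<Sum>t=1..T. p t * (d t - prev d t)) = (\<Sum>t=1..T. d t * p t) - (\<Sum>t\<in>{1..<T}. d t * p (t + 1))"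
proof (induction T)
  case (Suc T)
  show ?case
  proof (cases "T = 0")
    case False
    then have "{1..<Suc T} = insert T {1..<T}" by auto
    then show ?thesis using Suc False by (simp add: prev_def algebra_simps)
  qed (simp add: prev_def)
qed simp

lemma summation_by_parts_prev:
  "(\<Sum>t=1..T. p t * (d t - prev d t)) = (\<Sum>t=1..T. d t * (p t - (if t < T then p (t + 1) else 0)))"
proof -
  have "(\<Sum>t=1..T. d t * (p t - (if t < T then p (t + 1) else 0)))
      = (\<Sum>t=1..T. d t * p t) - (\<Sum>t=1..T. if t < T then d t * p (t + 1) else 0)"
    unfolding sum_subtractf[symmetric] by (rule sum.cong) (auto simp: algebra_simps)
  also have "(\<Sum>t=1..T. if t < T then d t * p (t + 1) else 0) = (\<Sum>t\<in>{1..<T}. d t * p (t + 1))"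
    by (rule sum.mono_neutral_cong_right) auto
  finally show ?thesis using sum_mult_diff_prev by simp
qed

text \<open>The cost is quadratic, so around a stationary point it grows by exactly the
  quadratic part, which is the cost of the displacement for the target \<open>\<theta> = 0\<close>.\<close>

lemma total_cost_add_stationary:
  assumes "stationary \<alpha> \<beta> T \<theta> y"
  shows "total_cost \<alpha> \<beta> T \<theta> (\<lambda>t. y t + d t)
       = total_cost \<alpha> \<beta> T \<theta> y + total_cost \<alpha> \<beta> T (\<lambda>_. 0) d"
proof -
  let ?dy = "\<lambda>t. y t - prev y t" and ?dd = "\<lambda>t. d t - prev d t"
  have "total_cost \<alpha> \<beta> T \<theta> (\<lambda>t. y t + d t) = total_cost \<alpha> \<beta> T \<theta> y + total_cost \<alpha> \<beta> T (\<lambda>_. 0) d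
      + ((\<Sum>t=1..T. d t * (\<alpha> * (y t - \<theta> t))) + \<beta> * (\<Sum>t=1..T. ?dy t * ?dd t))"
    unfolding total_cost_prev sum_distrib_left sum.distrib[symmetric]
    by (rule sum.cong) (simp_all add: prev_def power2_eq_square algebra_simps)
  also have "(\<Sum>t=1..T. ?dy t * ?dd t) = (\<Sum>t=1..T. d t * (?dy t - (if t < T then ?dy (t + 1) else 0)))"
    by (rule summation_by_parts_prev)
  also have "(\<Sum>t=1..T. d t * (\<alpha> * (y t - \<theta> t))) + \<beta> * \<dots> = (\<Sum>t=1..T. d t * 0)"
    unfolding sum_distrib_left sum.distrib[symmetric]
  proof (rule sum.cong)
    fix t assume "t \<in> {1..T}"
    then have prev_succ: "prev y (t + 1) = y t" and stat: "\<alpha> * (y t - \<theta> t) + \<beta> * ?dy t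
        - (if t < T then \<beta> * (y (t + 1) - y t) else 0) = 0"
      using assms by (auto simp: prev_def stationary_def)
    from prev_succ have "d t * (\<alpha> * (y t - \<theta> t)) + \<beta> * (d t * (?dy t - (if t < T then ?dy (t + 1) else 0)))
        = d t * (\<alpha> * (y t - \<theta> t) + \<beta> * ?dy t - (if t < T then \<beta> * (y (t + 1) - y t) else 0))"
      by (cases "t < T") (simp_all add: algebra_simps)
    then show "d t * (\<alpha> * (y t - \<theta> t)) + \<beta> * (d t * (?dy t - (if t < T then ?dy (t + 1) else 0)))
        = d t * 0"
      by (simp only: stat)
  qed simp
  finally show ?thesis by simp
qed

lemma stationary_imp_total_cost_le:
  assumes "stationary \<alpha> \<beta> T \<theta> y" "\<alpha> \<ge> 0" "\<beta> \<ge> 0"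
  shows "total_cost \<alpha> \<beta> T \<theta> y \<le> total_cost \<alpha> \<beta> T \<theta> z"
  using total_cost_add_stationary[OF assms(1), of "\<lambda>t. z t - y t"]
    total_cost_nonneg[OF assms(2,3)] by (simp add: add_increasing2)

lemma stationary_eq_if_total_cost_le:
  assumes "stationary \<alpha> \<beta> T \<theta> y" "\<alpha> > 0" "\<beta> \<ge> 0"
    and "total_cost \<alpha> \<beta> T \<theta> x \<le> total_cost \<alpha> \<beta> T \<theta> y" "t \<in> {1..T}"
  shows "x t = y t"
proof -
  have "total_cost \<alpha> \<beta> T (\<lambda>_. 0) (\<lambda>t. x t - y t) \<le> 0"
    using total_cost_add_stationary[OF assms(1), of "\<lambda>t. x t - y t"] assms(4) by simp
  then show ?thesis using total_cost_le_0_imp_eq[OF assms(2,3)] assms(5) by fastforce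
qed

lemma stationary_unique:
  assumes "stationary \<alpha> \<beta> T \<theta> x" "stationary \<alpha> \<beta> T \<theta> y" "\<alpha> > 0" "\<beta> \<ge> 0" "t \<in> {1..T}"
  shows "x t = y t"
  using assms stationary_imp_total_cost_le stationary_eq_if_total_cost_le by (metis less_imp_le)

lemma total_cost_contraction:
  assumes "\<alpha> \<ge> 0" "\<beta> \<ge> 0" "\<And>u v. \<bar>\<phi> u - \<phi> v\<bar> \<le> \<bar>u - v\<bar>" "\<phi> 0 = 0"
    and "\<And>t. t \<in> {1..T} \<Longrightarrow> \<phi> (\<theta> t) = \<theta> t"
  shows "total_cost \<alpha> \<beta> T \<theta> (\<lambda>t. \<phi> (x t)) \<le> total_cost \<alpha> \<beta> T \<theta> x"
  unfolding total_cost_prev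
proof (rule sum_mono)
  have sq: "(\<phi> u - \<phi> v)^2 \<le> (u - v)^2" for u v
    by (metis abs_ge_zero assms(3) power2_abs power_mono)
  fix t assume t: "t \<in> {1..T}"
  have "prev (\<lambda>t. \<phi> (x t)) t = \<phi> (prev x t)" using assms(4) by (simp add: prev_def)
  then show "\<alpha>/2 * (\<phi> (x t) - \<theta> t)^2 + \<beta>/2 * (\<phi> (x t) - prev (\<lambda>t. \<phi> (x t)) t)^2
      \<le> \<alpha>/2 * (x t - \<theta> t)^2 + \<beta>/2 * (x t - prev x t)^2"
    using sq[of "x t" "\<theta> t"] sq[of "x t" "prev x t"] assms(1,2) assms(5)[OF t]
    by (intro add_mono mult_left_mono) auto
qed

definition clip :: "real \<Rightarrow> real \<Rightarrow> real" where
  "clip D u = max (-D/2) (min (D/2) u)"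

lemma is_opt_eq_stationary:
  assumes "is_opt \<alpha> \<beta> D T \<theta> x" "stationary \<alpha> \<beta> T \<theta> y" "D > 0" "\<alpha> > 0" "\<beta> \<ge> 0"
    and "\<And>t. t \<in> {1..T} \<Longrightarrow> \<bar>\<theta> t\<bar> \<le> D/2" "t \<in> {1..T}"
  shows "x t = y t"
proof (rule stationary_eq_if_total_cost_le[OF assms(2,4,5) _ assms(7)])
  have "feasible D T (\<lambda>t. clip D (y t))" unfolding feasible_def clip_def using assms(3) by auto
  then have "total_cost \<alpha> \<beta> T \<theta> x \<le> total_cost \<alpha> \<beta> T \<theta> (\<lambda>t. clip D (y t))"
    using assms(1) unfolding is_opt_def by blast
  also have "\<dots> \<le> total_cost \<alpha> \<beta> T \<theta> y"
  proof (rule total_cost_contraction)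
    show "\<bar>clip D u - clip D v\<bar> \<le> \<bar>u - v\<bar>" for u v
      unfolding clip_def by (auto simp: max_def min_def)
    show "clip D 0 = 0" using assms(3) by (simp add: clip_def)
    show "clip D (\<theta> t) = \<theta> t" if "t \<in> {1..T}" for t
      using assms(6)[OF that] by (simp add: clip_def abs_le_iff)
  qed (use assms(4,5) in auto)
  finally show "total_cost \<alpha> \<beta> T \<theta> x \<le> total_cost \<alpha> \<beta> T \<theta> y" .
qed

lemma stationary_nonneg:
  assumes "stationary \<alpha> \<beta> T \<theta> y" "\<alpha> > 0" "\<beta> \<ge> 0" "\<And>t. t \<in> {1..T} \<Longrightarrow> \<theta> t \<ge> 0" "t \<in> {1..T}"
  shows "y t \<ge> 0"
proof -
  have "total_cost \<alpha> \<beta> T \<theta> (\<lambda>t. \<bar>y t\<bar>) \<le> total_cost \<alpha> \<beta> T \<theta> y"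
    using assms by (intro total_cost_contraction) auto
  then have "\<bar>y t\<bar> = y t" using stationary_eq_if_total_cost_le assms by blast
  then show ?thesis by (metis abs_ge_zero)
qed

lemma Hmat_carrier: "Hmat \<alpha> \<beta> T \<in> carrier_mat T T"
  unfolding Hmat_def by simp

lemma Hmat_mult_vec_nth:
  assumes "v \<in> carrier_vec T" "i < T"
  shows "(Hmat \<alpha> \<beta> T *\<^sub>v v) $ i = v $ i + \<beta>/\<alpha> * ((v $ i - (if i = 0 then 0 else v $ (i - 1)))
           - (if i + 1 < T then v $ (i + 1) - v $ i else 0))"
proof -
  define c where "c = \<beta>/\<alpha>"
  let ?c = c
  have "(Hmat \<alpha> \<beta> T *\<^sub>v v) $ i = (\<Sum>j\<in>{0..<T}. Hmat \<alpha> \<beta> T $$ (i, j) * v $ j)"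
    using assms Hmat_carrier[of \<alpha> \<beta> T] by (simp add: scalar_prod_def)
  also have "\<dots> = (\<Sum>j\<in>{0..<T}. (if j = i then (if i = T - 1 then 1 + ?c else 1 + 2 * ?c) * v $ j else 0)
      + (if j = i - 1 \<and> 0 < i then - ?c * v $ j else 0) + (if j = i + 1 then - ?c * v $ j else 0))"
    using assms(2) by (intro sum.cong) (auto simp: Hmat_def c_def)
  also have "\<dots> = v $ i + ?c * ((v $ i - (if i = 0 then 0 else v $ (i - 1)))
           - (if i + 1 < T then v $ (i + 1) - v $ i else 0))"
    using assms(2) by (simp add: sum.distrib sum.delta algebra_simps, arith)
  finally show ?thesis unfolding c_def .
qed

lemma stationary_if_Hmat_mult_vec:
  assumes "\<alpha> > 0" "v \<in> carrier_vec T" "\<And>i. i < T \<Longrightarrow> (Hmat \<alpha> \<beta> T *\<^sub>v v) $ i = \<theta> (i + 1)"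
  shows "stationary \<alpha> \<beta> T \<theta> (\<lambda>t. v $ (t - 1))"
  unfolding stationary_def
proof
  fix t assume "t \<in> {1..T}"
  define i where "i = t - 1"
  have t: "t = i + 1" "i < T" using \<open>t \<in> {1..T}\<close> unfolding i_def by auto
  have "v $ i + \<beta>/\<alpha> * ((v $ i - (if i = 0 then 0 else v $ (i - 1)))
      - (if i + 1 < T then v $ (i + 1) - v $ i else 0)) = \<theta> t"
    using Hmat_mult_vec_nth[OF assms(2) t(2)] assms(3)[OF t(2)] t(1) by simp
  then have H_eq: "\<alpha> * v $ i + \<beta> * ((v $ i - (if i = 0 then 0 else v $ (i - 1)))
      - (if i + 1 < T then v $ (i + 1) - v $ i else 0)) = \<alpha> * \<theta> t"
    using assms(1) by (simp add: field_simps)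
  have "prev (\<lambda>t. v $ (t - 1)) t = (if i = 0 then 0 else v $ (i - 1))"
    using t by (simp add: prev_def)
  then show "\<alpha> * (v $ (t - 1) - \<theta> t) + \<beta> * (v $ (t - 1) - prev (\<lambda>t. v $ (t - 1)) t)
      - (if t < T then \<beta> * (v $ (t + 1 - 1) - v $ (t - 1)) else 0) = 0"
    using H_eq t by (cases "i + 1 < T") (auto simp: algebra_simps)
qed

text \<open>\<open>H\<close> is invertible: a kernel vector would be a second stationary point for \<open>\<theta> = 0\<close>.\<close>

lemma det_Hmat_neq_0:
  assumes "\<alpha> > 0" "\<beta> \<ge> 0"
  shows "Determinant.det (Hmat \<alpha> \<beta> T) \<noteq> 0"
proof
  assume "Determinant.det (Hmat \<alpha> \<beta> T) = 0"
  then obtain v where v: "v \<in> carrier_vec T" "v \<noteq> 0\<^sub>v T" "Hmat \<alpha> \<beta> T *\<^sub>v v = 0\<^sub>v T"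
    using det_0_iff_vec_prod_zero[OF Hmat_carrier] by blast
  have v_stat: "stationary \<alpha> \<beta> T (\<lambda>_. 0) (\<lambda>t. v $ (t - 1))"
    using v by (intro stationary_if_Hmat_mult_vec[OF assms(1)]) auto
  have zero_stat: "stationary \<alpha> \<beta> T (\<lambda>_. 0) (\<lambda>_. 0)"
    unfolding stationary_def prev_def by simp
  have "v $ (i + 1 - 1) = 0" if "i < T" for i
    using stationary_unique[OF v_stat zero_stat assms, of "i + 1"] that by simp
  then have "v = 0\<^sub>v T" using v(1) by (intro eq_vecI) auto
  with v(2) show False by simp
qed

lemma Amat_right_inverse:
  assumes "\<alpha> > 0" "\<beta> \<ge> 0"
  shows "Hmat \<alpha> \<beta> T * Amat \<alpha> \<beta> T = 1\<^sub>m T" "Amat \<alpha> \<beta> T \<in> carrier_mat T T"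
proof -
  have "Hmat \<alpha> \<beta> T \<in> Units (ring_mat TYPE(real) T undefined)"
    by (rule det_non_zero_imp_unit[OF Hmat_carrier det_Hmat_neq_0[OF assms]])
  then have "mat_inverse (Hmat \<alpha> \<beta> T) \<noteq> None"
    using mat_inverse(1)[OF Hmat_carrier, of \<alpha> \<beta> T undefined] by blast
  then obtain B where B: "mat_inverse (Hmat \<alpha> \<beta> T) = Some B" by blast
  then have "Amat \<alpha> \<beta> T = B" unfolding Amat_def by simp
  with mat_inverse(2)[OF Hmat_carrier B]
  show "Hmat \<alpha> \<beta> T * Amat \<alpha> \<beta> T = 1\<^sub>m T" "Amat \<alpha> \<beta> T \<in> carrier_mat T T" by auto
qed

definition Hinv_sol :: "real \<Rightarrow> real \<Rightarrow> nat \<Rightarrow> (nat \<Rightarrow> real) \<Rightarrow> nat \<Rightarrow> real" where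
  "Hinv_sol \<alpha> \<beta> T \<theta> t = (Amat \<alpha> \<beta> T *\<^sub>v vec T (\<lambda>j. \<theta> (j + 1))) $ (t - 1)"

lemma stationary_Hinv_sol:
  assumes "\<alpha> > 0" "\<beta> \<ge> 0"
  shows "stationary \<alpha> \<beta> T \<theta> (Hinv_sol \<alpha> \<beta> T \<theta>)"
proof -
  let ?H = "Hmat \<alpha> \<beta> T" and ?A = "Amat \<alpha> \<beta> T" and ?v = "vec T (\<lambda>j. \<theta> (j + 1))"
  note A = Amat_right_inverse[OF assms, of T]
  have "?H *\<^sub>v (?A *\<^sub>v ?v) = (?H * ?A) *\<^sub>v ?v"
    using assoc_mult_mat_vec[OF Hmat_carrier A(2)] by simp
  then have "?H *\<^sub>v (?A *\<^sub>v ?v) = ?v" using A(1) by simp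
  then show ?thesis
    unfolding Hinv_sol_def[abs_def] using A(2)
    by (intro stationary_if_Hmat_mult_vec[OF assms(1)]) auto
qed

lemma Hinv_sol_eq_sum:
  assumes "\<alpha> > 0" "\<beta> \<ge> 0" "i < T"
  shows "Hinv_sol \<alpha> \<beta> T \<theta> (i + 1) = (\<Sum>j<T. Amat \<alpha> \<beta> T $$ (i, j) * \<theta> (j + 1))"
  using Amat_right_inverse(2)[OF assms(1,2), of T] assms(3)
  by (simp add: Hinv_sol_def scalar_prod_def lessThan_atLeast0)

lemma Amat_nonneg:
  assumes "\<alpha> > 0" "\<beta> \<ge> 0" "i < T" "j < T"
  shows "Amat \<alpha> \<beta> T $$ (i, j) \<ge> 0"
proof -
  define e :: "nat \<Rightarrow> real" where "e t = (if t = j + 1 then 1 else 0)" for t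
  have "Hinv_sol \<alpha> \<beta> T e (i + 1) = (\<Sum>k<T. if k = j then Amat \<alpha> \<beta> T $$ (i, k) else 0)"
    unfolding Hinv_sol_eq_sum[OF assms(1-3)] by (intro sum.cong) (auto simp: e_def)
  also have "\<dots> = Amat \<alpha> \<beta> T $$ (i, j)" using assms(4) by simp
  finally have "Hinv_sol \<alpha> \<beta> T e (i + 1) = Amat \<alpha> \<beta> T $$ (i, j)" .
  moreover have "Hinv_sol \<alpha> \<beta> T e (i + 1) \<ge> 0"
    using assms by (intro stationary_nonneg[OF stationary_Hinv_sol]) (auto simp: e_def)
  ultimately show ?thesis by simp
qed

lemma is_opt_theta_inst_first:
  assumes "is_opt \<alpha> \<beta> D T (theta_inst W c) x" "\<alpha> > 0" "\<beta> \<ge> 0" "D > 0" "\<bar>c\<bar> \<le> D/2" "T \<ge> 1"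
  shows "x 1 = c * (\<Sum>j\<in>{W..<T}. Amat \<alpha> \<beta> T $$ (0, j))"
proof -
  have "x 1 = Hinv_sol \<alpha> \<beta> T (theta_inst W c) 1"
    using assms(2-6) by (intro is_opt_eq_stationary[OF assms(1) stationary_Hinv_sol])
      (auto simp: theta_inst_def)
  also have "\<dots> = (\<Sum>j<T. Amat \<alpha> \<beta> T $$ (0, j) * theta_inst W c (j + 1))"
    using Hinv_sol_eq_sum[OF assms(2,3), of 0] assms(6) by simp
  also have "\<dots> = (\<Sum>j<T. if W \<le> j then c * Amat \<alpha> \<beta> T $$ (0, j) else 0)"
    by (intro sum.cong) (auto simp: theta_inst_def)
  also have "\<dots> = c * (\<Sum>j\<in>{W..<T}. Amat \<alpha> \<beta> T $$ (0, j))"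
  proof -
    have "{..<T} \<inter> {j. W \<le> j} = {W..<T}" by auto
    then show ?thesis by (simp add: sum.If_cases sum_distrib_left)
  qed
  finally show ?thesis .
qed

lemma expectation_pmf_of_pair:
  fixes g :: "real \<Rightarrow> real"
  assumes "a \<noteq> b"
  shows "measure_pmf.expectation (pmf_of_set {a, b}) g = (g a + g b) / 2"
  using assms by (subst integral_pmf_of_set) auto

theorem lemma10:
  fixes \<alpha> \<beta> D \<nu> :: real and W T :: nat
    and alg1 :: "(nat \<Rightarrow> real \<Rightarrow> real) \<Rightarrow> real"
    and xstar :: "real \<Rightarrow> nat \<Rightarrow> real"
  assumes "\<alpha> > 0" "\<beta> > 0" "D > 0" "T \<ge> W + 1" "0 < \<nu>" "\<nu> \<le> D"
    and online: "\<And>f g. (\<forall>t\<in>{1..W}. f t = g t) \<Longrightarrow> alg1 f = alg1 g"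
    and opt: "\<And>s. s \<in> {\<nu>/2, -\<nu>/2} \<Longrightarrow> is_opt \<alpha> \<beta> D T (theta_inst W s) (xstar s)"
  shows "measure_pmf.expectation (pmf_of_set {\<nu>/2, -\<nu>/2})
           (\<lambda>s. \<bar>alg1 (f_inst \<alpha> W s) - xstar s 1\<bar>^2)
         \<ge> (Amat \<alpha> \<beta> T $$ (0, W))^2 * \<nu>^2 / 4"
proof -
  define S where "S = (\<Sum>j\<in>{W..<T}. Amat \<alpha> \<beta> T $$ (0, j))"
  have xstar_1: "xstar s 1 = s * S" if "s \<in> {\<nu>/2, -\<nu>/2}" for s
    unfolding S_def using assms that by (intro is_opt_theta_inst_first[OF opt]) auto
  have x_plus: "xstar (\<nu>/2) 1 = \<nu>/2 * S" by (rule xstar_1) simp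
  have x_minus: "xstar (-\<nu>/2) 1 = -\<nu>/2 * S" by (rule xstar_1) simp
  have "Amat \<alpha> \<beta> T $$ (0, W) \<le> S"
    unfolding S_def using assms Amat_nonneg[of \<alpha> \<beta>]
    by (intro member_le_sum) auto
  moreover have "Amat \<alpha> \<beta> T $$ (0, W) \<ge> 0" using assms Amat_nonneg by simp
  ultimately have "(Amat \<alpha> \<beta> T $$ (0, W))^2 * \<nu>^2 / 4 \<le> (\<nu>/2 * S)^2"
    using assms by (simp add: power_mult_distrib power_divide power_mono)
  define c where "c = alg1 (f_inst \<alpha> W (\<nu>/2))"
  have c_minus: "alg1 (f_inst \<alpha> W (-\<nu>/2)) = c"
    unfolding c_def by (intro online) (auto simp: f_inst_def theta_inst_def)
  have "\<nu>/2 \<noteq> -\<nu>/2" using assms(5) by simp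
  then have "measure_pmf.expectation (pmf_of_set {\<nu>/2, -\<nu>/2}) (\<lambda>s. \<bar>alg1 (f_inst \<alpha> W s) - xstar s 1\<bar>^2)
      = (\<bar>c - xstar (\<nu>/2) 1\<bar>^2 + \<bar>alg1 (f_inst \<alpha> W (-\<nu>/2)) - xstar (-\<nu>/2) 1\<bar>^2) / 2"
    unfolding c_def by (rule expectation_pmf_of_pair)
  also have "\<dots> = ((c - \<nu>/2 * S)^2 + (c + \<nu>/2 * S)^2) / 2"
    unfolding c_minus x_plus x_minus
    by (simp add: power2_abs)
  moreover have "(\<nu>/2 * S)^2 \<le> ((c - \<nu>/2 * S)^2 + (c + \<nu>/2 * S)^2) / 2"
    by (simp add: power2_eq_square algebra_simps)
  ultimately show ?thesis using \<open>(Amat \<alpha> \<beta> T $$ (0, W))^2 * \<nu>^2 / 4 \<le> (\<nu>/2 * S)^2\<close> by linarith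
qed

end
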